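(* Let $w\in\mathcal S_n$ and $a,b\in\mathrm R(w)$. Then $a$ and $b$ lie in the same commutation class if and only if $\Gamma(a,(x,y,z))=\Gamma(b,(x,y,z))$ for every triple $(x,y,z)\in\mathrm T_w$.
   Context: Permutations are in one-line notation. A word $a=a_1\cdots a_\ell$ with letters in $\{1,\dots,n-1\}$ acts on a word of length $n$ by successively swapping the entries in positions $a_j$ and $a_j+1$, $j=1,\dots,\ell$. $\mathrm R(w)$ is the set of reduced words of $w$ (words of length $\ell(w)$, the number of inversions of $w$, whose action on $12\cdots n$ yields $w$). For $a\in\mathrm R(w)$, each inversion $(p,q)$ of $w$ (values $p>q$ with $p$ left of $q$ in $w$) is created by exactly one step, and $P_a(p,q)$ denotes the index of that step. Two reduced words differ by a commutation if one is obtained from the other by replacing a factor $ij$ with $|i-j|\ge2$ by $ji$; the commutation class $[a]$ is the set of reduced words reachable from $a$ by sequences of commutations. $\mathrm T_w$ is the set of triples of values $(x,y,z)$ with $x<y<z$ such that $z,y,x$ appear in this order from left to right in $w$. For $a\in\mathrm R(w)$ and $(x,y,z)\in\mathrm T_w$, $\Gamma(a,(x,y,z))=1$ if $P_a(y,x)>P_a(z,y)$ and $\Gamma(a,(x,y,z))=0$ if $P_a(y,x)<P_a(z,y)$. *)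

theory Defs
  imports Main
begin

text \<open>Permutations in one-line notation are lists; positions are 1-indexed as in the paper.\<close>

definition is_perm :: "nat \<Rightarrow> nat list \<Rightarrow> bool" where
  "is_perm n w \<longleftrightarrow> length w = n \<and> distinct w \<and> set w = {1..n}"

definition id_perm :: "nat \<Rightarrow> nat list" where
  "id_perm n = [1..<n+1]"

definition swap_pos :: "nat list \<Rightarrow> nat \<Rightarrow> nat list" where
  "swap_pos u i = u[i - 1 := u ! i, i := u ! (i - 1)]"

definition act :: "nat list \<Rightarrow> nat list \<Rightarrow> nat list" where
  "act u a = foldl swap_pos u a"

definition inv_count :: "nat list \<Rightarrow> nat" where
  "inv_count w = card {(i, j). i < j \<and> j < length w \<and> w ! i > w ! j}"

definition red_words :: "nat \<Rightarrow> nat list \<Rightarrow> nat list set" where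
  "red_words n w = {a. set a \<subseteq> {1..n - 1} \<and> length a = inv_count w
                        \<and> act (id_perm n) a = w}"

text \<open>Step j (1-indexed) of word a acting on 12...n creates inversion (p,q), p > q:
  the values q (left) and p (right) get swapped, putting p to the left of q.\<close>
definition creates :: "nat \<Rightarrow> nat list \<Rightarrow> nat \<Rightarrow> nat \<Rightarrow> nat \<Rightarrow> bool" where
  "creates n a j p q \<longleftrightarrow>
     (let u = act (id_perm n) (take (j - 1) a); i = a ! (j - 1)
      in u ! (i - 1) = q \<and> u ! i = p \<and> q < p)"

definition P :: "nat \<Rightarrow> nat list \<Rightarrow> nat \<Rightarrow> nat \<Rightarrow> nat" where
  "P n a p q = (THE j. 1 \<le> j \<and> j \<le> length a \<and> creates n a j p q)"

definition comm_step :: "nat list \<Rightarrow> nat list \<Rightarrow> bool" where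
  "comm_step a b \<longleftrightarrow> (\<exists>u v i j. (i + 2 \<le> j \<or> j + 2 \<le> i) \<and>
       a = u @ [i, j] @ v \<and> b = u @ [j, i] @ v)"

definition comm_class :: "nat list \<Rightarrow> nat list set" where
  "comm_class a = {b. comm_step\<^sup>*\<^sup>* a b}"

definition T :: "nat list \<Rightarrow> (nat \<times> nat \<times> nat) set" where
  "T w = {(x, y, z). x < y \<and> y < z \<and>
     (\<exists>i j k. i < j \<and> j < k \<and> k < length w \<and> w ! i = z \<and> w ! j = y \<and> w ! k = x)}"

definition Gamma :: "nat \<Rightarrow> nat list \<Rightarrow> nat \<times> nat \<times> nat \<Rightarrow> nat" where
  "Gamma n a t = (case t of (x, y, z) \<Rightarrow> if P n a y x > P n a z y then 1 else 0)"

end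

theory Submission
  imports Defs "HOL-Combinatorics.Transposition"
begin

text \<open>Every step of a reduced word a of w creates exactly one new inversion, so the steps of a
  are in bijection with the inversions of w via P_a. A commutation exchanges two consecutive steps
  acting on disjoint positions; their inversions share no value, whereas the two inversions
  (y, x) and (z, y) of a triple share y, so the relative order of P(y, x) and P(z, y), i.e.
  Gamma, never changes. Conversely, induct on the length: let the last letter s of a create the
  inversion (d, c) of the adjacent entries d, c of w. Comparing Gamma for a and b on the triples
  through c and d shows that after b creates (d, c), no later step of b touches d or c. Hence d
  and c stay in the positions s - 1, s, all later letters of b commute with that letter s, and
  it can be moved to the end of b; deleting s from both words leaves two reduced words of w s_s
  with the same Gamma.\<close>

lemma length_swap_pos [simp]: "length (swap_pos u i) = length u"
  by (simp add: swap_pos_def)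

lemma nth_swap_pos:
  assumes "1 \<le> i" "i < length u" "k < length u"
  shows "swap_pos u i ! k = (if k = i - 1 then u ! i else if k = i then u ! (i - 1) else u ! k)"
  using assms by (auto simp: swap_pos_def nth_list_update)

lemma swap_pos_swap_pos:
  assumes "1 \<le> i" "i < length u"
  shows "swap_pos (swap_pos u i) i = u"
  using assms by (intro nth_equalityI) (auto simp: nth_swap_pos)

lemma swap_pos_commute:
  assumes "1 \<le> i" "i < length u" "1 \<le> j" "j < length u" "i + 2 \<le> j \<or> j + 2 \<le> i"
  shows "swap_pos (swap_pos u i) j = swap_pos (swap_pos u j) i"
proof (intro nth_equalityI)
  fix k assume "k < length (swap_pos (swap_pos u i) j)"
  moreover have "i - 1 \<noteq> j - 1" "i - 1 \<noteq> j" "i \<noteq> j - 1" "i \<noteq> j" using assms by auto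
  ultimately show "swap_pos (swap_pos u i) j ! k = swap_pos (swap_pos u j) i ! k"
    using assms by (simp add: nth_swap_pos)
qed simp

lemma distinct_swap_pos: "1 \<le> i \<Longrightarrow> i < length u \<Longrightarrow> distinct (swap_pos u i) = distinct u"
  unfolding swap_pos_def by (simp add: distinct_swap)

lemma set_swap_pos: "1 \<le> i \<Longrightarrow> i < length u \<Longrightarrow> set (swap_pos u i) = set u"
  unfolding swap_pos_def by (simp add: set_swap)

lemma is_perm_swap_pos: "is_perm n u \<Longrightarrow> 1 \<le> i \<Longrightarrow> i < n \<Longrightarrow> is_perm n (swap_pos u i)"
  unfolding is_perm_def by (simp add: distinct_swap_pos set_swap_pos)

lemma act_Nil [simp]: "act u [] = u"
  by (simp add: act_def)

lemma act_Cons [simp]: "act u (x # xs) = act (swap_pos u x) xs"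
  by (simp add: act_def)

lemma act_append: "act u (xs @ ys) = act (act u xs) ys"
  by (simp add: act_def)

lemma act_snoc: "act u (xs @ [x]) = swap_pos (act u xs) x"
  by (simp add: act_def)

lemma length_act [simp]: "length (act u xs) = length u"
  by (induction xs arbitrary: u) simp_all

lemma act_commuting_letters:
  assumes "1 \<le> i" "i < length x" "1 \<le> j" "j < length x" "i + 2 \<le> j \<or> j + 2 \<le> i"
  shows "act x (u @ [j, i] @ v) = act x (u @ [i, j] @ v)"
  using swap_pos_commute[of i "act x u" j] assms by (simp add: act_append)

lemma length_id_perm [simp]: "length (id_perm n) = n"
  by (simp add: id_perm_def)

lemma nth_id_perm: "k < n \<Longrightarrow> id_perm n ! k = k + 1"
  by (simp add: id_perm_def del: upt_Suc)

lemma is_perm_id_perm: "is_perm n (id_perm n)"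
  unfolding is_perm_def id_perm_def by auto

section \<open>Precedence and inversion sets\<close>

definition before :: "nat list \<Rightarrow> nat \<Rightarrow> nat \<Rightarrow> bool" where
  "before u x y \<longleftrightarrow> (\<exists>i j. i < j \<and> j < length u \<and> u ! i = x \<and> u ! j = y)"

definition inversions :: "nat list \<Rightarrow> (nat \<times> nat) set" where
  "inversions u = {(p, q). q < p \<and> before u p q}"

lemma before_antisym: "distinct u \<Longrightarrow> before u x y \<Longrightarrow> \<not> before u y x"
  unfolding before_def by (metis distinct_conv_nth less_trans not_less_iff_gr_or_eq)

lemma before_nth_right:
  "distinct u \<Longrightarrow> j < length u \<Longrightarrow> before u v (u ! j) \<longleftrightarrow> (\<exists>i<j. u ! i = v)"
  unfolding before_def by (auto simp: nth_eq_iff_index_eq)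

lemma before_nth_left:
  "distinct u \<Longrightarrow> j < length u \<Longrightarrow> before u (u ! j) v \<longleftrightarrow> (\<exists>i. j < i \<and> i < length u \<and> u ! i = v)"
  unfolding before_def by (auto simp: nth_eq_iff_index_eq)

lemma before_adjacent:
  assumes "distinct u" "1 \<le> r" "r < length u" "v \<noteq> u ! (r - 1)" "v \<noteq> u ! r"
  shows "before u v (u ! (r - 1)) \<longleftrightarrow> before u v (u ! r)"
    and "before u (u ! (r - 1)) v \<longleftrightarrow> before u (u ! r) v"
proof -
  have r1: "r - 1 < length u" using assms by auto
  show "before u v (u ! (r - 1)) \<longleftrightarrow> before u v (u ! r)"
    unfolding before_nth_right[OF assms(1) r1] before_nth_right[OF assms(1) assms(3)]
    using assms by (metis Suc_pred' less_Suc_eq less_le_trans less_one not_le)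
  show "before u (u ! (r - 1)) v \<longleftrightarrow> before u (u ! r) v"
    unfolding before_nth_left[OF assms(1) r1] before_nth_left[OF assms(1) assms(3)]
    using assms by (metis Suc_pred' less_Suc_eq less_le_trans less_one not_le le_simps(3))
qed

lemma transpose_adjacent_less_iff:
  fixes i k l :: nat
  assumes "1 \<le> i" "{k, l} \<noteq> {i - 1, i}"
  shows "transpose (i - 1) i k < transpose (i - 1) i l \<longleftrightarrow> k < l"
  using assms unfolding transpose_def doubleton_eq_iff by auto

lemma nth_swap_pos_transpose:
  "1 \<le> i \<Longrightarrow> i < length u \<Longrightarrow> k < length u \<Longrightarrow> swap_pos u i ! k = u ! transpose (i - 1) i k"
  by (simp add: nth_swap_pos transpose_def)

lemma before_swap_pos_iff:
  assumes "1 \<le> i" "i < length u"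
  shows "before (swap_pos u i) x y \<longleftrightarrow> (\<exists>k l. k < length u \<and> l < length u \<and>
           transpose (i - 1) i k < transpose (i - 1) i l \<and> u ! k = x \<and> u ! l = y)"
    (is "_ \<longleftrightarrow> (\<exists>k l. _ \<and> _ \<and> ?t k < ?t l \<and> _)")
proof
  have t: "?t k < length u \<longleftrightarrow> k < length u" for k
    using assms by (auto simp: transpose_def)
  note nth = nth_swap_pos_transpose[OF assms]
  show "\<exists>k l. k < length u \<and> l < length u \<and> ?t k < ?t l \<and> u ! k = x \<and> u ! l = y"
    if "before (swap_pos u i) x y"
  proof -
    from that obtain k l where kl: "k < l" "l < length u" "swap_pos u i ! k = x" "swap_pos u i ! l = y"
      unfolding before_def by auto
    have "u ! ?t k = x" "u ! ?t l = y"
      using kl nth[of k] nth[of l] by simp_all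
    moreover have "?t k < length u" "?t l < length u" "?t (?t k) < ?t (?t l)"
      using kl t[of k] t[of l] by simp_all
    ultimately show ?thesis by blast
  qed
  show "before (swap_pos u i) x y"
    if "\<exists>k l. k < length u \<and> l < length u \<and> ?t k < ?t l \<and> u ! k = x \<and> u ! l = y"
  proof -
    from that obtain k l where kl: "k < length u" "l < length u" "?t k < ?t l" "u ! k = x" "u ! l = y"
      by blast
    have "swap_pos u i ! ?t k = x" "swap_pos u i ! ?t l = y"
      using kl nth[of "?t k"] nth[of "?t l"] t[of k] t[of l] by simp_all
    moreover have "?t l < length u"
      using kl t[of l] by simp
    ultimately show ?thesis
      unfolding before_def using kl(3) by (intro exI[of _ "?t k"] exI[of _ "?t l"]) simp
  qed
qed

lemma before_swap_pos_created:
  assumes "1 \<le> i" "i < length u"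
  shows "before (swap_pos u i) (u ! i) (u ! (i - 1))"
proof -
  have "transpose (i - 1) i i < transpose (i - 1) i (i - 1)" "i - 1 < length u"
    using assms by simp_all
  then show ?thesis
    unfolding before_swap_pos_iff[OF assms] using assms by blast
qed

lemma before_swap_pos_destroyed:
  assumes "distinct u" "1 \<le> i" "i < length u"
  shows "\<not> before (swap_pos u i) (u ! (i - 1)) (u ! i)"
proof -
  have "transpose (i - 1) i (i - 1) > transpose (i - 1) i i" "i - 1 < length u"
    using assms by simp_all
  then show ?thesis
    unfolding before_swap_pos_iff[OF assms(2,3)] using assms by (auto simp: nth_eq_iff_index_eq)
qed

lemma before_swap_pos_other:
  assumes "1 \<le> i" "i < length u"
    and "\<not> (x = u ! i \<and> y = u ! (i - 1))" "\<not> (x = u ! (i - 1) \<and> y = u ! i)"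
  shows "before (swap_pos u i) x y \<longleftrightarrow> before u x y"
proof
  let ?t = "transpose (i - 1) i"
  have key: "?t k < ?t l \<longleftrightarrow> k < l" if "u ! k = x" "u ! l = y" for k l
  proof (rule transpose_adjacent_less_iff[OF assms(1)])
    show "{k, l} \<noteq> {i - 1, i}"
    proof
      assume "{k, l} = {i - 1, i}"
      then have "k = i - 1 \<and> l = i \<or> k = i \<and> l = i - 1" by (simp add: doubleton_eq_iff)
      then show False using assms(3,4) that by blast
    qed
  qed
  show "before u x y" if "before (swap_pos u i) x y"
  proof -
    from that obtain k l where "l < length u" "?t k < ?t l" "u ! k = x" "u ! l = y"
      unfolding before_swap_pos_iff[OF assms(1,2)] by blast
    with key have "k < l" "l < length u" "u ! k = x" "u ! l = y" by blast+
    then show ?thesis unfolding before_def by blast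
  qed
  show "before (swap_pos u i) x y" if "before u x y"
  proof -
    from that obtain k l where "k < l" "l < length u" "u ! k = x" "u ! l = y"
      unfolding before_def by blast
    with key have "k < length u" "l < length u" "?t k < ?t l" "u ! k = x" "u ! l = y" by auto
    then show ?thesis unfolding before_swap_pos_iff[OF assms(1,2)] by blast
  qed
qed

lemma mem_inversions: "(p, q) \<in> inversions u \<longleftrightarrow> q < p \<and> before u p q"
  by (simp add: inversions_def)

lemma inversions_swap_pos_subset:
  assumes "distinct u" "1 \<le> i" "i < length u"
  shows "inversions (swap_pos u i) \<subseteq> insert (u ! i, u ! (i - 1)) (inversions u)"
proof clarify
  fix p q
  assume pq: "(p, q) \<in> inversions (swap_pos u i)" and new: "(p, q) \<notin> inversions u"
  show "p = u ! i \<and> q = u ! (i - 1)"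
  proof (rule ccontr)
    assume "\<not> (p = u ! i \<and> q = u ! (i - 1))"
    moreover have "\<not> (p = u ! (i - 1) \<and> q = u ! i)"
      using pq before_swap_pos_destroyed[OF assms] by (auto simp: mem_inversions)
    ultimately have "before (swap_pos u i) p q \<longleftrightarrow> before u p q"
      using before_swap_pos_other[OF assms(2,3)] by blast
    then show False using pq new by (simp add: mem_inversions)
  qed
qed

lemma finite_inversions: "finite (inversions u)"
proof (rule finite_subset)
  show "inversions u \<subseteq> set u \<times> set u"
    unfolding inversions_def before_def by auto
qed simp

lemma card_inversions: "distinct u \<Longrightarrow> card (inversions u) = inv_count u"
proof -
  let ?S = "{(i, j). i < j \<and> j < length u \<and> u ! i > u ! j}"
  let ?f = "\<lambda>(i, j). (u ! i, u ! j)"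
  assume "distinct u"
  then have "inj_on ?f ?S"
    by (auto simp: inj_on_def nth_eq_iff_index_eq)
  moreover have "inversions u = ?f ` ?S"
    unfolding inversions_def before_def by (auto simp: image_def)
  ultimately show ?thesis
    unfolding inv_count_def by (simp add: card_image)
qed

lemma inversions_id_perm: "inversions (id_perm n) = {}"
  unfolding inversions_def before_def by (auto simp: nth_id_perm)

lemma inversions_swap_pos_ascent:
  assumes "distinct u" "1 \<le> i" "i < length u" "u ! (i - 1) < u ! i"
  shows "inversions (swap_pos u i) = insert (u ! i, u ! (i - 1)) (inversions u)"
    and "(u ! i, u ! (i - 1)) \<notin> inversions u"
proof -
  have "before u (u ! (i - 1)) (u ! i)"
    unfolding before_def using assms by (intro exI[of _ "i - 1"] exI[of _ i]) auto
  then show notin: "(u ! i, u ! (i - 1)) \<notin> inversions u"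
    using before_antisym[OF assms(1)] by (simp add: mem_inversions)
  have "(p, q) \<in> inversions (swap_pos u i)" if "(p, q) \<in> inversions u" for p q
  proof -
    have "\<not> (p = u ! i \<and> q = u ! (i - 1))" using that notin by blast
    moreover have "\<not> (p = u ! (i - 1) \<and> q = u ! i)" using that assms(4) by (auto simp: mem_inversions)
    ultimately show ?thesis
      using that before_swap_pos_other[OF assms(2,3)] by (simp add: mem_inversions)
  qed
  moreover have "(u ! i, u ! (i - 1)) \<in> inversions (swap_pos u i)"
    using before_swap_pos_created[OF assms(2,3)] assms(4) by (simp add: mem_inversions)
  ultimately show "inversions (swap_pos u i) = insert (u ! i, u ! (i - 1)) (inversions u)"
    using inversions_swap_pos_subset[OF assms(1-3)] by auto
qed

lemma card_inversions_swap_pos_le: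
  assumes "distinct u" "1 \<le> i" "i < length u"
  shows "card (inversions (swap_pos u i)) \<le> Suc (card (inversions u))"
proof -
  have "card (inversions (swap_pos u i)) \<le> card (insert (u ! i, u ! (i - 1)) (inversions u))"
    using inversions_swap_pos_subset[OF assms] by (simp add: card_mono finite_inversions)
  also have "\<dots> \<le> Suc (card (inversions u))"
    by (simp add: card_insert_le_m1 finite_inversions)
  finally show ?thesis .
qed

text \<open>At a descent no inversion is created: the only candidate is not ordered decreasingly.\<close>
lemma inversions_swap_pos_descent:
  assumes "distinct u" "1 \<le> i" "i < length u" "u ! i < u ! (i - 1)"
  shows "inversions (swap_pos u i) \<subseteq> inversions u"
  using inversions_swap_pos_subset[OF assms(1-3)] assms(4) by (auto simp: mem_inversions)

lemma card_inversions_swap_pos_descent: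
  assumes "distinct u" "1 \<le> i" "i < length u" "u ! i < u ! (i - 1)"
  shows "card (inversions (swap_pos u i)) \<le> card (inversions u)"
  using inversions_swap_pos_descent[OF assms] by (simp add: card_mono finite_inversions)

text \<open>Steps are indexed from 0 here: step j of the word is step j + 1 of the paper.\<close>
definition stage :: "nat \<Rightarrow> nat list \<Rightarrow> nat \<Rightarrow> nat list" where
  "stage n a j = act (id_perm n) (take j a)"

definition created :: "nat \<Rightarrow> nat list \<Rightarrow> nat \<Rightarrow> nat \<times> nat" where
  "created n a j = (stage n a j ! (a ! j), stage n a j ! (a ! j - 1))"

lemma stage_0 [simp]: "stage n a 0 = id_perm n"
  by (simp add: stage_def)

lemma stage_Suc: "j < length a \<Longrightarrow> stage n a (Suc j) = swap_pos (stage n a j) (a ! j)"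
  by (simp add: stage_def take_Suc_conv_app_nth act_snoc)

lemma length_stage [simp]: "length (stage n a j) = n"
  by (simp add: stage_def)

lemma letter_range:
  fixes a :: "nat list"
  assumes "set a \<subseteq> {1..n - 1}" "j < length a"
  shows "1 \<le> a ! j \<and> a ! j < n"
proof -
  have "1 \<le> a ! j" "a ! j \<le> n - 1" using assms nth_mem by fastforce+
  then show ?thesis by arith
qed

lemma is_perm_stage:
  assumes "set a \<subseteq> {1..n - 1}"
  shows "is_perm n (stage n a j)"
proof (induction j)
  case (Suc j)
  then show ?case
    using letter_range[OF assms] is_perm_swap_pos
    by (cases "j < length a") (simp_all add: stage_Suc, simp add: stage_def)
qed (simp add: is_perm_id_perm)

locale reduced_word =
  fixes n :: nat and w a :: "nat list"
  assumes reduced: "a \<in> red_words n w"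
begin

lemma letters: "set a \<subseteq> {1..n - 1}"
  using reduced by (simp add: red_words_def)

lemma stage_length: "stage n a (length a) = w"
  using reduced by (simp add: red_words_def stage_def)

lemma is_perm_target: "is_perm n w"
  using is_perm_stage[OF letters, of "length a"] by (simp add: stage_length)

lemma distinct_stage: "distinct (stage n a j)"
  using is_perm_stage[OF letters] by (simp add: is_perm_def)

lemma letter_bounds: "j < length a \<Longrightarrow> 1 \<le> a ! j" "j < length a \<Longrightarrow> a ! j < n"
  using letter_range[OF letters] by auto

lemma card_inversions_target: "card (inversions w) = length a"
  using reduced card_inversions is_perm_target by (simp add: red_words_def is_perm_def)

lemma card_inversions_stage_Suc:
  "j < length a \<Longrightarrow> card (inversions (stage n a (Suc j))) \<le> Suc (card (inversions (stage n a j)))"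
  using card_inversions_swap_pos_le distinct_stage letter_bounds by (simp add: stage_Suc)

lemma card_inversions_stage_le: "j \<le> length a \<Longrightarrow> card (inversions (stage n a j)) \<le> j"
  by (induction j) (auto simp: inversions_id_perm dest!: card_inversions_stage_Suc[OF Suc_le_lessD])

lemma card_inversions_stage_growth:
  "j \<le> k \<Longrightarrow> k \<le> length a \<Longrightarrow> card (inversions (stage n a k)) \<le> card (inversions (stage n a j)) + (k - j)"
proof (induction k rule: dec_induct)
  case (step k)
  then show ?case
    using card_inversions_stage_Suc[of k] by simp
qed simp

text \<open>Every step of a reduced word creates an inversion: a descent would leave the count of
  inversions behind the number of steps, which it can never make up again.\<close>
lemma step_ascent: "j < length a \<Longrightarrow> stage n a j ! (a ! j - 1) < stage n a j ! (a ! j)"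
proof (rule ccontr)
  assume j: "j < length a" and "\<not> stage n a j ! (a ! j - 1) < stage n a j ! (a ! j)"
  moreover have "stage n a j ! (a ! j - 1) \<noteq> stage n a j ! (a ! j)"
    using letter_bounds[OF j] distinct_stage[of j] by (simp add: nth_eq_iff_index_eq)
  ultimately have "card (inversions (stage n a (Suc j))) \<le> card (inversions (stage n a j))"
    using card_inversions_swap_pos_descent distinct_stage letter_bounds by (simp add: stage_Suc)
  then have "card (inversions (stage n a (Suc j))) \<le> j"
    using card_inversions_stage_le[of j] j by simp
  then have "card (inversions w) \<le> j + (length a - Suc j)"
    using card_inversions_stage_growth[of "Suc j" "length a"] j by (simp add: stage_length)
  then show False
    using j card_inversions_target by simp
qed

lemma created_less: "j < length a \<Longrightarrow> snd (created n a j) < fst (created n a j)"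
  using step_ascent by (simp add: created_def)

lemma inversions_stage_Suc:
  assumes "j < length a"
  shows "inversions (stage n a (Suc j)) = insert (created n a j) (inversions (stage n a j))"
    and "created n a j \<notin> inversions (stage n a j)"
  using inversions_swap_pos_ascent[OF distinct_stage letter_bounds(1)[OF assms] _ step_ascent[OF assms]]
    letter_bounds(2)[OF assms]
  by (simp_all add: stage_Suc[OF assms] created_def)

lemma inversions_stage: "j \<le> length a \<Longrightarrow> inversions (stage n a j) = created n a ` {..<j}"
  by (induction j) (simp_all add: inversions_id_perm inversions_stage_Suc lessThan_Suc)

lemma inversions_target: "inversions w = created n a ` {..<length a}"
  using inversions_stage[of "length a"] by (simp add: stage_length)

lemma inj_on_created: "inj_on (created n a) {..<length a}"
proof -
  have "created n a j \<noteq> created n a k" if "j < k" "k < length a" for j k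
    using that inversions_stage[of k] inversions_stage_Suc(2)[of k]
    by (metis image_eqI lessThan_iff less_imp_le)
  then show ?thesis
    by (metis inj_onI lessThan_iff linorder_neqE_nat)
qed

lemma creates_Suc_iff: "j < length a \<Longrightarrow> creates n a (Suc j) p q \<longleftrightarrow> created n a j = (p, q)"
  using created_less[of j] by (auto simp: creates_def created_def stage_def Let_def)

lemma P_created: "j < length a \<Longrightarrow> created n a j = (p, q) \<Longrightarrow> P n a p q = Suc j"
  unfolding P_def
proof (rule the_equality)
  assume j: "j < length a" "created n a j = (p, q)"
  then show "1 \<le> Suc j \<and> Suc j \<le> length a \<and> creates n a (Suc j) p q"
    using creates_Suc_iff by simp
  fix k
  assume "1 \<le> k \<and> k \<le> length a \<and> creates n a k p q"
  then obtain k' where k': "k = Suc k'" "k' < length a" "created n a k' = (p, q)"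
    using creates_Suc_iff by (cases k) auto
  then show "k = Suc j"
    using inj_on_created j by (metis inj_onD lessThan_iff)
qed

lemma P_inversion:
  "(p, q) \<in> inversions w \<Longrightarrow> \<exists>j < length a. created n a j = (p, q) \<and> P n a p q = Suc j"
  using inversions_target P_created by force

lemma P_range: "(p, q) \<in> inversions w \<Longrightarrow> 1 \<le> P n a p q \<and> P n a p q \<le> length a"
  using P_inversion by fastforce

lemma P_inj:
  "(p, q) \<in> inversions w \<Longrightarrow> (p', q') \<in> inversions w \<Longrightarrow> P n a p q = P n a p' q' \<Longrightarrow> (p, q) = (p', q')"
  using P_inversion by (metis Suc_inject)

lemma inversions_stage_iff_P:
  assumes "(p, q) \<in> inversions w" "j \<le> length a"
  shows "(p, q) \<in> inversions (stage n a j) \<longleftrightarrow> P n a p q \<le> j"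
proof -
  obtain k where k: "k < length a" "created n a k = (p, q)" "P n a p q = Suc k"
    using P_inversion[OF assms(1)] by blast
  have "(p, q) \<in> inversions (stage n a j) \<longleftrightarrow> created n a k \<in> created n a ` {..<j}"
    unfolding inversions_stage[OF assms(2)] k(2) ..
  also have "\<dots> \<longleftrightarrow> k < j"
    using inj_on_image_mem_iff[OF inj_on_created] k(1) assms(2) by auto
  finally show ?thesis
    using k by (simp add: Suc_le_eq)
qed

lemma inversions_stage_subset: "j \<le> length a \<Longrightarrow> inversions (stage n a j) \<subseteq> inversions w"
  using inversions_stage inversions_target by auto

lemma created_Suc_commuting:
  assumes "Suc j < length a" "a ! j + 2 \<le> a ! Suc j \<or> a ! Suc j + 2 \<le> a ! j"
  shows "created n a (Suc j) = (stage n a j ! (a ! Suc j), stage n a j ! (a ! Suc j - 1))"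
proof -
  have "1 \<le> a ! j" "a ! j < n" "1 \<le> a ! Suc j" "a ! Suc j < n"
    using letter_bounds assms(1) by auto
  then show ?thesis
    using assms by (auto simp: created_def stage_Suc nth_swap_pos)
qed

lemma created_commuting_disjoint:
  assumes "Suc j < length a" "a ! j + 2 \<le> a ! Suc j \<or> a ! Suc j + 2 \<le> a ! j"
  shows "fst (created n a j) \<noteq> snd (created n a (Suc j))"
    and "snd (created n a j) \<noteq> fst (created n a (Suc j))"
proof -
  have "1 \<le> a ! j" "a ! j < n" "1 \<le> a ! Suc j" "a ! Suc j < n"
    using letter_bounds assms(1) by auto
  then show "fst (created n a j) \<noteq> snd (created n a (Suc j))"
    and "snd (created n a j) \<noteq> fst (created n a (Suc j))"
    using assms distinct_stage[of j] unfolding created_Suc_commuting[OF assms]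
    by (auto simp: created_def nth_eq_iff_index_eq)
qed

end

section \<open>Commutations preserve \<Gamma>\<close>

lemma Gamma_triple: "Gamma n a (x, y, z) = (if P n a z y < P n a y x then 1 else 0)"
  by (simp add: Gamma_def)

lemma T_iff:
  assumes "distinct w"
  shows "(x, y, z) \<in> T w \<longleftrightarrow> x < y \<and> y < z \<and> before w z y \<and> before w y x"
proof
  assume "(x, y, z) \<in> T w"
  then obtain i j k where "x < y" "y < z" "i < j" "j < k" "k < length w" "w ! i = z" "w ! j = y" "w ! k = x"
    unfolding T_def by auto
  moreover have "before w z y" unfolding before_def using calculation
    by (intro exI[of _ i] exI[of _ j]) auto
  moreover have "before w y x" unfolding before_def using calculation
    by (intro exI[of _ j] exI[of _ k]) auto
  ultimately show "x < y \<and> y < z \<and> before w z y \<and> before w y x" by simp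
next
  assume h: "x < y \<and> y < z \<and> before w z y \<and> before w y x"
  then obtain i j where ij: "i < j" "j < length w" "w ! i = z" "w ! j = y" unfolding before_def by auto
  from h obtain j' k where jk: "j' < k" "k < length w" "w ! j' = y" "w ! k = x" unfolding before_def by auto
  have "j = j'" using assms ij jk by (metis distinct_conv_nth less_trans)
  then show "(x, y, z) \<in> T w" unfolding T_def using ij jk h by blast
qed

lemma T_iff_inversions:
  "distinct w \<Longrightarrow> (x, y, z) \<in> T w \<longleftrightarrow> (z, y) \<in> inversions w \<and> (y, x) \<in> inversions w"
  by (auto simp: T_iff mem_inversions)

lemma red_words_comm:
  assumes "u @ [i, j] @ v \<in> red_words n w" "i + 2 \<le> j \<or> j + 2 \<le> i"
  shows "u @ [j, i] @ v \<in> red_words n w"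
proof -
  interpret reduced_word n w "u @ [i, j] @ v"
    by unfold_locales (fact assms(1))
  have "1 \<le> i" "i < n" "1 \<le> j" "j < n"
    using letter_bounds[of "length u"] letter_bounds[of "Suc (length u)"] by (auto simp: nth_append)
  then show ?thesis
    using assms act_commuting_letters[of i "id_perm n" j u v] by (auto simp: red_words_def)
qed

lemma created_comm:
  fixes u v :: "nat list"
  defines "N \<equiv> length u"
  assumes red: "u @ [i, j] @ v \<in> red_words n w" and ij: "i + 2 \<le> j \<or> j + 2 \<le> i"
    and k: "k < length (u @ [i, j] @ v)"
  shows "created n (u @ [j, i] @ v) (transpose N (Suc N) k) = created n (u @ [i, j] @ v) k"
proof -
  define a b where "a = u @ [i, j] @ v" and "b = u @ [j, i] @ v"
  interpret A: reduced_word n w a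
    by unfold_locales (use red in \<open>simp add: a_def\<close>)
  interpret B: reduced_word n w b
    by unfold_locales (use red_words_comm[OF red ij] in \<open>simp add: b_def\<close>)
  have letters: "a ! N = i" "a ! Suc N = j" "b ! N = j" "b ! Suc N = i"
    "Suc N < length a" "Suc N < length b"
    by (simp_all add: a_def b_def N_def nth_append)
  have "1 \<le> i" "i < n" "1 \<le> j" "j < n"
    using A.letter_bounds[of N] A.letter_bounds[of "Suc N"] letters by auto
  then have later_stages: "stage n b m = stage n a m" if "Suc N < m" for m
  proof -
    define r where "r = m - Suc (Suc N)"
    then have "m = Suc (Suc N) + r"
      using that by simp
    then have "take m a = u @ [i, j] @ take r v" and "take m b = u @ [j, i] @ take r v"
      by (simp_all add: a_def b_def N_def)
    then show ?thesis
      using act_commuting_letters[of i "id_perm n" j u] ij \<open>1 \<le> i\<close> \<open>i < n\<close> \<open>1 \<le> j\<close> \<open>j < n\<close>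
      by (simp add: stage_def)
  qed
  have early_stages: "stage n b m = stage n a m" if "m \<le> N" for m
    using that by (simp add: stage_def a_def b_def N_def)
  have ij': "a ! N + 2 \<le> a ! Suc N \<or> a ! Suc N + 2 \<le> a ! N"
    "b ! N + 2 \<le> b ! Suc N \<or> b ! Suc N + 2 \<le> b ! N"
    using ij letters by auto
  consider "k = N" | "k = Suc N" | "k \<noteq> N" "k \<noteq> Suc N" by blast
  then have "created n b (transpose N (Suc N) k) = created n a k"
  proof cases
    case 1
    then show ?thesis
      using B.created_Suc_commuting[OF letters(6) ij'(2)] early_stages[of N] letters(1-4)
      by (simp add: created_def)
  next
    case 2
    then show ?thesis
      using A.created_Suc_commuting[OF letters(5) ij'(1)] early_stages[of N] letters(1-4)
      by (simp add: created_def)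
  next
    case 3
    then have "stage n b k = stage n a k"
      using later_stages early_stages by (cases "k \<le> N") auto
    moreover have "b ! k = a ! k"
      using 3 by (auto simp: a_def b_def N_def nth_append nth_Cons split: nat.splits)
    ultimately show ?thesis
      using 3 by (simp add: created_def)
  qed
  then show ?thesis
    by (simp add: a_def b_def)
qed

lemma Gamma_comm:
  assumes red: "u @ [i, j] @ v \<in> red_words n w" and ij: "i + 2 \<le> j \<or> j + 2 \<le> i"
    and t: "t \<in> T w"
  shows "Gamma n (u @ [j, i] @ v) t = Gamma n (u @ [i, j] @ v) t"
proof -
  define a b N where "a = u @ [i, j] @ v" and "b = u @ [j, i] @ v" and "N = length u"
  let ?\<sigma> = "transpose N (Suc N)"
  interpret A: reduced_word n w a
    by unfold_locales (use red in \<open>simp add: a_def\<close>)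
  interpret B: reduced_word n w b
    by unfold_locales (use red_words_comm[OF red ij] in \<open>simp add: b_def\<close>)
  have P_b: "P n b p q = Suc (?\<sigma> k)" if "k < length a" "created n a k = (p, q)" for k p q
  proof (rule B.P_created)
    show "?\<sigma> k < length b"
      using that by (auto simp: a_def b_def N_def transpose_def)
    show "created n b (?\<sigma> k) = (p, q)"
      using created_comm[OF red ij] that by (simp add: a_def b_def N_def)
  qed
  obtain x y z where xyz: "t = (x, y, z)"
    by (cases t)
  have inv: "(y, x) \<in> inversions w" "(z, y) \<in> inversions w"
    using T_iff_inversions A.is_perm_target t xyz by (auto simp: is_perm_def)
  obtain k1 where k1: "k1 < length a" "created n a k1 = (y, x)" "P n a y x = Suc k1"
    using A.P_inversion[OF inv(1)] by blast
  obtain k2 where k2: "k2 < length a" "created n a k2 = (z, y)" "P n a z y = Suc k2"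
    using A.P_inversion[OF inv(2)] by blast
  have "Suc N < length a" "a ! N + 2 \<le> a ! Suc N \<or> a ! Suc N + 2 \<le> a ! N"
    using ij by (auto simp: a_def N_def nth_append)
  then have "{k2, k1} \<noteq> {Suc N - 1, Suc N}"
    using A.created_commuting_disjoint[of N] k1 k2 by (auto simp: doubleton_eq_iff)
  then have "?\<sigma> k2 < ?\<sigma> k1 \<longleftrightarrow> k2 < k1"
    using transpose_adjacent_less_iff[of "Suc N" k2 k1] by simp
  then show ?thesis
    using P_b[OF k1(1,2)] P_b[OF k2(1,2)] k1(3) k2(3)
    by (simp add: xyz Gamma_triple a_def b_def)
qed

lemma comm_class_red_words_Gamma:
  assumes "a \<in> red_words n w" "b \<in> comm_class a"
  shows "b \<in> red_words n w \<and> (\<forall>t\<in>T w. Gamma n a t = Gamma n b t)"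
proof -
  have "comm_step\<^sup>*\<^sup>* a b"
    using assms(2) by (simp add: comm_class_def)
  then show ?thesis
  proof (induction rule: rtranclp_induct)
    case (step b c)
    then obtain u v i j where "i + 2 \<le> j \<or> j + 2 \<le> i" "b = u @ [i, j] @ v" "c = u @ [j, i] @ v"
      by (auto simp: comm_step_def)
    then show ?case
      using step.IH red_words_comm Gamma_comm by metis
  qed (simp add: assms(1))
qed

lemma red_words_snocD:
  assumes "a @ [s] \<in> red_words n w"
  shows "a \<in> red_words n (swap_pos w s)" and "1 \<le> s" "s < n" and "w ! s < w ! (s - 1)"
proof -
  interpret reduced_word n w "a @ [s]"
    by unfold_locales (fact assms)
  let ?w' = "stage n (a @ [s]) (length a)"
  show s: "1 \<le> s" "s < n"
    using letter_bounds[of "length a"] by simp_all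
  have "w = swap_pos ?w' s"
    using stage_Suc[of "length a"] stage_length by simp
  then have w': "swap_pos w s = ?w'" "w = swap_pos ?w' s"
    using swap_pos_swap_pos s by simp_all
  show "w ! s < w ! (s - 1)"
    using step_ascent[of "length a"] s by (simp add: w'(2) nth_swap_pos)
  have "card (inversions ?w') = length a"
    using inversions_stage[of "length a"] inj_on_created
    by (simp add: card_image inj_on_subset[of _ "{..<Suc (length a)}"])
  then have "inv_count ?w' = length a"
    using card_inversions distinct_stage by simp
  then show "a \<in> red_words n (swap_pos w s)"
    using letters by (simp add: w'(1) red_words_def stage_def)
qed

lemma T_swap_pos_descent:
  assumes "distinct u" "1 \<le> i" "i < length u" "u ! i < u ! (i - 1)"
  shows "T (swap_pos u i) \<subseteq> T u"
  using inversions_swap_pos_descent[OF assms] T_iff_inversions assms(1-3)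
  by (auto simp: distinct_swap_pos)

lemma P_snoc:
  assumes "a @ [s] \<in> red_words n w" "(p, q) \<in> inversions (swap_pos w s)"
  shows "P n (a @ [s]) p q = P n a p q"
proof -
  interpret A: reduced_word n w "a @ [s]"
    by unfold_locales (fact assms(1))
  interpret A': reduced_word n "swap_pos w s" a
    by unfold_locales (fact red_words_snocD(1)[OF assms(1)])
  obtain j where j: "j < length a" "created n a j = (p, q)" "P n a p q = Suc j"
    using A'.P_inversion[OF assms(2)] by blast
  moreover have "created n (a @ [s]) j = created n a j"
    using j(1) by (simp add: created_def stage_def nth_append)
  ultimately show ?thesis
    using A.P_created[of j] by simp
qed

lemma Gamma_snoc:
  assumes "a @ [s] \<in> red_words n w" "t \<in> T (swap_pos w s)"
  shows "Gamma n (a @ [s]) t = Gamma n a t"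
proof -
  interpret A': reduced_word n "swap_pos w s" a
    by unfold_locales (fact red_words_snocD(1)[OF assms(1)])
  obtain x y z where xyz: "t = (x, y, z)"
    by (cases t)
  then have "(z, y) \<in> inversions (swap_pos w s)" "(y, x) \<in> inversions (swap_pos w s)"
    using T_iff_inversions A'.is_perm_target assms(2) by (auto simp: is_perm_def)
  then show ?thesis
    using P_snoc[OF assms(1)] by (simp add: xyz Gamma_triple)
qed

lemma comm_step_sym: "comm_step a b \<Longrightarrow> comm_step b a"
  unfolding comm_step_def by (metis add.commute)

lemma comm_rtranclp_sym: "comm_step\<^sup>*\<^sup>* a b \<Longrightarrow> comm_step\<^sup>*\<^sup>* b a"
proof -
  have "symp comm_step"
    by (rule sympI) (rule comm_step_sym)
  then show "comm_step\<^sup>*\<^sup>* a b \<Longrightarrow> comm_step\<^sup>*\<^sup>* b a"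
    by (rule sympD[OF symp_rtranclp])
qed

lemma comm_step_append: "comm_step a b \<Longrightarrow> comm_step (a @ c) (b @ c)"
  unfolding comm_step_def by (metis append.assoc)

lemma comm_rtranclp_append: "comm_step\<^sup>*\<^sup>* a b \<Longrightarrow> comm_step\<^sup>*\<^sup>* (a @ c) (b @ c)"
proof (induction rule: rtranclp_induct)
  case (step b b')
  then show ?case
    using comm_step_append by (metis rtranclp.rtrancl_into_rtrancl)
qed simp

lemma comm_rtranclp_move_to_end:
  "\<forall>x\<in>set v. x + 2 \<le> s \<or> s + 2 \<le> x \<Longrightarrow> comm_step\<^sup>*\<^sup>* (u @ [s] @ v) (u @ v @ [s])"
proof (induction v arbitrary: u)
  case (Cons x v)
  have "comm_step (u @ [s] @ x # v) ((u @ [x]) @ [s] @ v)"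
    unfolding comm_step_def using Cons.prems
    by (intro exI[of _ u] exI[of _ v] exI[of _ s] exI[of _ x]) auto
  moreover have "comm_step\<^sup>*\<^sup>* ((u @ [x]) @ [s] @ v) ((u @ [x]) @ v @ [s])"
    using Cons.IH[of "u @ [x]"] Cons.prems by simp
  ultimately show ?case
    by simp
qed simp

section \<open>Words with the same \<Gamma> are commutation equivalent\<close>

text \<open>The induction step of the converse direction.\<close>
locale Gamma_equivalent_last_step =
  a: reduced_word n w a + b: reduced_word n w b
  for n :: nat and w a b :: "nat list" +
  fixes s d c k :: nat
  assumes Gamma_eq: "\<forall>t\<in>T w. Gamma n a t = Gamma n b t"
    and last_step: "P n a d c = length a"
    and s_range: "1 \<le> s" "s < n"
    and adjacent: "w ! (s - 1) = d" "w ! s = c"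
    and created_by_b: "k < length b" "created n b k = (d, c)"
begin

lemma distinct_w: "distinct w"
  using a.is_perm_target by (simp add: is_perm_def)

lemma dc_inversion: "(d, c) \<in> inversions w"
  using b.inversions_target created_by_b by force

lemma c_less_d: "c < d"
  using dc_inversion by (simp add: mem_inversions)

lemma P_b_dc: "P n b d c = Suc k"
  using b.P_created created_by_b by blast

lemma before_adjacent_w:
  assumes "v \<noteq> d" "v \<noteq> c"
  shows "before w v d \<longleftrightarrow> before w v c" and "before w d v \<longleftrightarrow> before w c v"
  using before_adjacent[OF distinct_w s_range(1), of v] s_range assms adjacent a.is_perm_target
  by (simp_all add: is_perm_def)

text \<open>Since (d, c) is created last in a, the triples through c and d force b to create the
  inversions (c, q) and (p, d) before (d, c).\<close>
lemma P_b_lower: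
  assumes "(c, q) \<in> inversions w"
  shows "P n b c q < P n b d c"
proof -
  have "(q, c, d) \<in> T w"
    using assms dc_inversion distinct_w by (simp add: T_iff_inversions)
  moreover have "Gamma n a (q, c, d) = 0"
    using a.P_range[OF assms] last_step by (simp add: Gamma_triple)
  ultimately have "P n b c q \<le> P n b d c"
    using Gamma_eq by (fastforce simp: Gamma_triple split: if_splits)
  moreover have "P n b c q \<noteq> P n b d c"
    using b.P_inj[OF assms dc_inversion] c_less_d by auto
  ultimately show ?thesis
    by simp
qed

lemma P_b_upper:
  assumes "(p, d) \<in> inversions w"
  shows "P n b p d < P n b d c"
proof -
  have "(c, d, p) \<in> T w"
    using assms dc_inversion distinct_w by (simp add: T_iff_inversions)
  moreover have "P n a p d \<noteq> length a"
    using a.P_inj[OF assms dc_inversion] last_step c_less_d by auto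
  then have "Gamma n a (c, d, p) = 1"
    using a.P_range[OF assms] last_step by (simp add: Gamma_triple)
  ultimately show ?thesis
    using Gamma_eq by (fastforce simp: Gamma_triple split: if_splits)
qed

context
  fixes l p q :: nat
  assumes later: "k < l" "l < length b" and created_l: "created n b l = (p, q)"
begin

lemma pq_inversion: "(p, q) \<in> inversions w"
  using b.inversions_target later created_l by force

lemma P_b_pq: "P n b p q = Suc l"
  using b.P_created later created_l by blast

lemma dc_inversion_stage: "(d, c) \<in> inversions (stage n b l)"
  using b.inversions_stage_iff_P[OF dc_inversion, of l] P_b_dc later by simp

lemma stage_at_letter: "stage n b l ! (b ! l) = p" "stage n b l ! (b ! l - 1) = q"
  using created_l by (simp_all add: created_def)

lemma later_fst_ne_c: "p \<noteq> c"
  using P_b_lower[of q] pq_inversion P_b_pq P_b_dc later by auto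

lemma later_snd_ne_d: "q \<noteq> d"
  using P_b_upper[of p] pq_inversion P_b_pq P_b_dc later by auto

lemma later_snd_ne_c: "q \<noteq> c"
proof
  let ?U = "stage n b l" and ?r = "b ! l"
  assume qc: "q = c"
  have "p \<noteq> d"
  proof
    assume "p = d"
    then have "created n b l = created n b k"
      using created_l created_by_b qc by simp
    then have "l = k"
      using b.inj_on_created later created_by_b(1) by (simp add: inj_on_eq_iff)
    then show False
      using later by simp
  qed
  have r: "1 \<le> ?r" "?r < length ?U"
    using b.letter_bounds later by auto
  have "before ?U d c"
    using dc_inversion_stage by (simp add: mem_inversions)
  then have "before ?U d p"
    using before_adjacent(1)[OF b.distinct_stage r, of d] stage_at_letter qc \<open>p \<noteq> d\<close> c_less_d
    by auto
  moreover have "before w p d"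
    using before_adjacent_w(1)[of p] pq_inversion qc \<open>p \<noteq> d\<close> by (auto simp: mem_inversions)
  ultimately show False
  proof (cases "d < p")
    case True
    then have "(p, d) \<in> inversions ?U"
      using P_b_upper[of p] b.inversions_stage_iff_P[of p d l] \<open>before w p d\<close> P_b_dc later
      by (simp add: mem_inversions)
    then show False
      using before_antisym[OF b.distinct_stage \<open>before ?U d p\<close>] by (simp add: mem_inversions)
  next
    case False
    then have "(d, p) \<in> inversions ?U"
      using \<open>before ?U d p\<close> \<open>p \<noteq> d\<close> by (simp add: mem_inversions)
    then have "(d, p) \<in> inversions w"
      using b.inversions_stage_subset[of l] later by auto
    then show False
      using before_antisym[OF distinct_w \<open>before w p d\<close>] by (simp add: mem_inversions)
  qed
qed

lemma later_fst_ne_d: "p \<noteq> d"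
proof
  let ?U = "stage n b l" and ?r = "b ! l"
  assume pd: "p = d"
  have r: "1 \<le> ?r" "?r < length ?U"
    using b.letter_bounds later by auto
  have "before ?U d c"
    using dc_inversion_stage by (simp add: mem_inversions)
  then have "before ?U q c"
    using before_adjacent(2)[OF b.distinct_stage r, of c] stage_at_letter pd later_snd_ne_c c_less_d
    by auto
  moreover have "before w c q"
    using before_adjacent_w(2)[of q] pq_inversion pd later_snd_ne_c later_snd_ne_d
    by (auto simp: mem_inversions)
  ultimately show False
  proof (cases "q < c")
    case True
    then have "(c, q) \<in> inversions ?U"
      using P_b_lower[of q] b.inversions_stage_iff_P[of c q l] \<open>before w c q\<close> P_b_dc later
      by (simp add: mem_inversions)
    then show False
      using before_antisym[OF b.distinct_stage \<open>before ?U q c\<close>] by (simp add: mem_inversions)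
  next
    case False
    then have "(q, c) \<in> inversions ?U"
      using \<open>before ?U q c\<close> later_snd_ne_c by (simp add: mem_inversions)
    then have "(q, c) \<in> inversions w"
      using b.inversions_stage_subset[of l] later by auto
    then show False
      using before_antisym[OF distinct_w \<open>before w c q\<close>] by (simp add: mem_inversions)
  qed
qed

lemma later_step_avoids_dc:
  "stage n b l ! (b ! l) \<notin> {c, d}" "stage n b l ! (b ! l - 1) \<notin> {c, d}"
  using later_fst_ne_c later_fst_ne_d later_snd_ne_c later_snd_ne_d stage_at_letter by auto

end

lemma stage_keeps_dc:
  "Suc k \<le> l \<Longrightarrow> l \<le> length b \<Longrightarrow> stage n b l ! (b ! k - 1) = d \<and> stage n b l ! (b ! k) = c"
proof (induction l rule: dec_induct)
  case base
  have bk: "1 \<le> b ! k" "b ! k < n"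
    using b.letter_bounds created_by_b by auto
  then have "b ! k \<noteq> b ! k - 1"
    by simp
  then show ?case
    using created_by_b bk by (simp add: stage_Suc created_def nth_swap_pos)
next
  case (step l)
  let ?r = "b ! l"
  have r: "1 \<le> ?r" "?r < n" "1 \<le> b ! k" "b ! k < n"
    using b.letter_bounds created_by_b step by auto
  have "stage n b l ! ?r \<notin> {c, d}" "stage n b l ! (?r - 1) \<notin> {c, d}"
    using later_step_avoids_dc[of l] step by (auto simp: created_def)
  then have "b ! k - 1 \<noteq> ?r - 1" "b ! k - 1 \<noteq> ?r" "b ! k \<noteq> ?r - 1" "b ! k \<noteq> ?r"
    using step.IH step.prems by auto
  then show ?case
    using step r by (simp add: stage_Suc nth_swap_pos)
qed

lemma later_letters_commute:
  assumes "k < l" "l < length b"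
  shows "b ! l + 2 \<le> b ! k \<or> b ! k + 2 \<le> b ! l"
proof -
  have "stage n b l ! (b ! l) \<notin> {c, d}" "stage n b l ! (b ! l - 1) \<notin> {c, d}"
    using later_step_avoids_dc[of l] assms by (auto simp: created_def)
  then have "b ! l \<noteq> b ! k - 1" "b ! l \<noteq> b ! k" "b ! l - 1 \<noteq> b ! k"
    using stage_keeps_dc[of l] assms by auto
  moreover have "1 \<le> b ! k" "1 \<le> b ! l"
    using b.letter_bounds created_by_b assms by auto
  ultimately show ?thesis
    by linarith
qed

lemma letter_creating_dc: "b ! k = s"
proof -
  have "w ! (b ! k - 1) = w ! (s - 1)"
    using stage_keeps_dc[of "length b"] created_by_b b.stage_length adjacent by simp
  moreover have "1 \<le> b ! k" "b ! k < n"
    using b.letter_bounds created_by_b by auto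
  ultimately show ?thesis
    using distinct_w s_range a.is_perm_target by (simp add: is_perm_def nth_eq_iff_index_eq)
qed

end

theorem Gamma_eq_imp_comm_rtranclp:
  "a \<in> red_words n w \<Longrightarrow> b \<in> red_words n w \<Longrightarrow> \<forall>t\<in>T w. Gamma n a t = Gamma n b t
    \<Longrightarrow> comm_step\<^sup>*\<^sup>* a b"
proof (induction a arbitrary: w b rule: rev_induct)
  case Nil
  then show ?case
    by (simp add: red_words_def)
next
  case (snoc s a)
  let ?w' = "swap_pos w s"
  interpret A: reduced_word n w "a @ [s]"
    by unfold_locales (fact snoc.prems(1))
  interpret B: reduced_word n w b
    by unfold_locales (fact snoc.prems(2))
  note snocD = red_words_snocD[OF snoc.prems(1)]
  define d c where "d = w ! (s - 1)" and "c = w ! s"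
  have "w = swap_pos (stage n (a @ [s]) (length a)) s"
    using A.stage_length stage_Suc[of "length a" "a @ [s]" n] by simp
  then have "created n (a @ [s]) (length a) = (d, c)"
    unfolding d_def c_def using snocD(2,3) by (simp add: created_def nth_swap_pos)
  then have last_step: "P n (a @ [s]) d c = length (a @ [s])" and "(d, c) \<in> inversions w"
    using A.P_created[of "length a"] A.inversions_target by force+
  then obtain k where k: "k < length b" "created n b k = (d, c)"
    using B.P_inversion by blast
  interpret Gamma_equivalent_last_step n w "a @ [s]" b s d c k
    using snoc.prems(3) last_step snocD(2,3) k by unfold_locales (simp_all add: d_def c_def)
  define b' where "b' = take k b @ drop (Suc k) b"
  have "b = take k b @ [s] @ drop (Suc k) b"
    using id_take_nth_drop[OF k(1)] letter_creating_dc by simp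
  moreover have "\<forall>x\<in>set (drop (Suc k) b). x + 2 \<le> s \<or> s + 2 \<le> x"
  proof
    fix x
    assume "x \<in> set (drop (Suc k) b)"
    then obtain i where "i < length b - Suc k" "b ! (Suc k + i) = x"
      by (auto simp: in_set_conv_nth)
    then show "x + 2 \<le> s \<or> s + 2 \<le> x"
      using later_letters_commute[of "Suc k + i"] letter_creating_dc by simp
  qed
  ultimately have b_b': "comm_step\<^sup>*\<^sup>* b (b' @ [s])"
    using comm_rtranclp_move_to_end[of "drop (Suc k) b" s "take k b"] by (simp add: b'_def)
  then have "b' @ [s] \<in> comm_class b"
    by (simp add: comm_class_def)
  note b'_red = comm_class_red_words_Gamma[OF snoc.prems(2) this]
  have "\<forall>t\<in>T ?w'. Gamma n a t = Gamma n b' t"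
  proof
    fix t assume t: "t \<in> T ?w'"
    then have "t \<in> T w"
      using T_swap_pos_descent[OF distinct_w snocD(2)] snocD(3,4) A.is_perm_target
      by (auto simp: is_perm_def)
    then show "Gamma n a t = Gamma n b' t"
      using Gamma_snoc[OF snoc.prems(1) t] Gamma_snoc[OF b'_red[THEN conjunct1] t]
        snoc.prems(3) b'_red by simp
  qed
  then have "comm_step\<^sup>*\<^sup>* a b'"
    using snoc.IH snocD(1) red_words_snocD(1)[OF b'_red[THEN conjunct1]] by blast
  then show ?case
    using comm_rtranclp_append comm_rtranclp_sym[OF b_b'] by (metis rtranclp_trans)
qed

theorem mainTheorem3:
  fixes n :: nat and w a b :: "nat list"
  assumes "is_perm n w"
    and "a \<in> red_words n w"
    and "b \<in> red_words n w"
  shows "b \<in> comm_class a \<longleftrightarrow> (\<forall>t \<in> T w. Gamma n a t = Gamma n b t)"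
proof
  assume "b \<in> comm_class a"
  then show "\<forall>t \<in> T w. Gamma n a t = Gamma n b t"
    using comm_class_red_words_Gamma[OF assms(2)] by blast
next
  assume "\<forall>t \<in> T w. Gamma n a t = Gamma n b t"
  then show "b \<in> comm_class a"
    using Gamma_eq_imp_comm_rtranclp assms(2,3) by (simp add: comm_class_def)
qed

end
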